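(* Let $\gamma<\delta$, $c>0$, $g(t)=c(\delta-t)$ on $[\gamma,\delta]$, and let $0<\beta<\alpha$. Then for every concave function $\varphi:[\gamma,\delta]\to[0,\infty)$ that is not identically zero, \[\frac{\int_\gamma^\delta t\,\varphi(t)^{\alpha-\beta}g(t)^\beta\,dt}{\int_\gamma^\delta \varphi(t)^{\alpha-\beta}g(t)^\beta\,dt}\leq\frac{\int_\gamma^\delta t\,(t-\gamma)^{\alpha-\beta}g(t)^\beta\,dt}{\int_\gamma^\delta (t-\gamma)^{\alpha-\beta}g(t)^\beta\,dt}=\gamma+(\delta-\gamma)\frac{\alpha-\beta+1}{\alpha+2}.\] *)

theory Defs
  imports "HOL-Analysis.Analysis"
begin

end

theory Submission
  imports Defs
begin

text \<open>
  Write \<open>p = \<alpha> - \<beta>\<close>. As \<open>\<phi>\<close> is concave with \<open>\<phi> \<gamma> \<ge> 0\<close>, the ratio \<open>r t = \<phi> t / (t - \<gamma>)\<close>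
  is nonincreasing, so the weight \<open>\<phi> t powr p * g t powr \<beta>\<close> is the model weight
  \<open>(t - \<gamma>) powr p * g t powr \<beta>\<close> times the nonincreasing factor \<open>r t powr p\<close>. If \<open>M\<close> is the
  centre of mass of the model weight, then \<open>(t - M) * (r t powr p - r M powr p) \<le> 0\<close>, and
  integrating this against the model weight shows that the new centre of mass is at most \<open>M\<close>.
  The model weight is a beta density; its centre of mass comes from
  \<open>(t - \<gamma>) powr (p + 1) * (\<delta> - t) powr (\<beta> + 1)\<close>, which vanishes at both ends and has
  derivative \<open>-(p + \<beta> + 2) * (t - M) * (t - \<gamma>) powr p * (\<delta> - t) powr \<beta>\<close>.
\<close>

lemma integrable_on_Icc_if_bounded_continuous_on_Ioo:
  fixes f :: "real \<Rightarrow> real"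
  assumes "continuous_on {a<..<b} f" and "\<And>t. t \<in> {a<..<b} \<Longrightarrow> \<bar>f t\<bar> \<le> B"
  shows "f integrable_on {a..b}"
proof -
  have "f integrable_on {a<..<b}"
  proof (rule measurable_bounded_by_integrable_imp_integrable_real)
    show "f \<in> borel_measurable (lebesgue_on {a<..<b})"
      by (rule continuous_imp_measurable_on_sets_lebesgue[OF assms(1)]) auto
    show "(\<lambda>x. B) integrable_on {a<..<b}"
      using integrable_on_Icc_iff_Ioo integrable_const_ivl by blast
  qed (use assms in auto)
  then show ?thesis
    using integrable_on_Icc_iff_Ioo by blast
qed

lemma integral_pos_if_continuous_on_Ioo:
  fixes f :: "real \<Rightarrow> real"
  assumes "continuous_on {a<..<b} f" and "\<And>t. t \<in> {a..b} \<Longrightarrow> 0 \<le> f t"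
    and "f integrable_on {a..b}" and x: "x \<in> {a<..<b}" and "f x > 0"
  shows "integral {a..b} f > 0"
proof -
  define a' b' where "a' = (a + x) / 2" and "b' = (x + b) / 2"
  have sub: "{a'..b'} \<subseteq> {a<..<b}" and x': "x \<in> {a'..b'}" and "a' < b'"
    using x by (auto simp: a'_def b'_def)
  have "f integrable_on {a'..b'}"
    by (rule integrable_subinterval_real[OF assms(3)]) (use sub in auto)
  then have "integral {a'..b'} f \<le> integral {a..b} f"
    using sub assms(2,3) by (intro integral_subset_le) auto
  moreover have "integral {a'..b'} f \<noteq> 0"
    using integral_eq_0_iff[of a' b' f] continuous_on_subset[OF assms(1) sub] \<open>a' < b'\<close>
      sub x' assms(2,5) by fastforce
  moreover have "0 \<le> integral {a'..b'} f"
    using \<open>f integrable_on {a'..b'}\<close> sub assms(2) by (intro integral_nonneg) auto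
  ultimately show ?thesis
    by linarith
qed

lemma integral_mult_diff_left:
  fixes w :: "real \<Rightarrow> real"
  assumes "w integrable_on S" and "(\<lambda>t. t * w t) integrable_on S"
  shows "integral S (\<lambda>t. (t - M) * w t) = integral S (\<lambda>t. t * w t) - M * integral S w"
proof -
  have "integral S (\<lambda>t. (t - M) * w t) = integral S (\<lambda>t. t * w t - M * w t)"
    by (simp add: left_diff_distrib)
  also have "\<dots> = integral S (\<lambda>t. t * w t) - M * integral S w"
    using integral_diff[OF assms(2) integrable_on_cmult_left[OF assms(1), of M]] by simp
  finally show ?thesis .
qed

lemma concave_on_Icc_ratio_left:
  fixes f :: "real \<Rightarrow> real"
  assumes "concave_on {a..b} f" and "f a \<ge> 0" and "a < s" "s \<le> t" "t \<le> b"
  shows "f t * (s - a) \<le> f s * (t - a)"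
proof -
  have "concave_on {a..t} f"
    using assms(1) unfolding concave_on_def by (rule convex_on_subset) (use assms in auto)
  then have "(f t - f a) / (t - a) * (s - a) + f a \<le> f s"
    using concave_onD_Icc'[of a t f s] assms by auto
  moreover have "f a * (s - a) \<le> f a * (t - a)"
    using assms by (intro mult_left_mono) auto
  ultimately show ?thesis
    using assms by (simp add: field_simps)
qed

lemma concave_on_Icc_ratio_right:
  fixes f :: "real \<Rightarrow> real"
  assumes "concave_on {a..b} f" and "f b \<ge> 0" and "a \<le> t" "t \<le> s" "s < b"
  shows "f t * (b - s) \<le> f s * (b - t)"
proof -
  have "concave_on {t..b} f"
    using assms(1) unfolding concave_on_def by (rule convex_on_subset) (use assms in auto)
  then have "(f t - f b) / (b - t) * (b - s) + f b \<le> f s"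
    using concave_onD_Icc''[of t b f s] assms by auto
  moreover have "f b * (b - s) \<le> f b * (b - t)"
    using assms by (intro mult_left_mono) auto
  ultimately show ?thesis
    using assms by (simp add: field_simps)
qed

lemma concave_on_Icc_pos_interior:
  fixes f :: "real \<Rightarrow> real"
  assumes "concave_on {a..b} f" and "f a \<ge> 0" "f b \<ge> 0"
    and "x \<in> {a..b}" "f x > 0" and "t \<in> {a<..<b}"
  shows "f t > 0"
proof (cases "t \<le> x")
  case True
  have "0 < f x * (t - a)"
    using assms by simp
  also have "\<dots> \<le> f t * (x - a)"
    using True assms by (intro concave_on_Icc_ratio_left) auto
  finally show ?thesis
    using True assms(6) by (simp add: zero_less_mult_iff)
next
  case False
  have "0 < f x * (b - t)"
    using assms by simp
  also have "\<dots> \<le> f t * (b - x)"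
    using False assms by (intro concave_on_Icc_ratio_right) auto
  finally show ?thesis
    using False assms(6) by (simp add: zero_less_mult_iff)
qed

lemma concave_on_Icc_le_twice_midpoint:
  fixes f :: "real \<Rightarrow> real"
  assumes "concave_on {a..b} f" and "\<And>t. t \<in> {a..b} \<Longrightarrow> f t \<ge> 0" and t: "t \<in> {a..b}"
  shows "f t \<le> 2 * f ((a + b) / 2)"
proof -
  have "(1 - 1/2) * f t + 1/2 * f (a + b - t) \<le> f ((1 - 1/2) *\<^sub>R t + (1/2) *\<^sub>R (a + b - t))"
    using t by (intro concave_onD[OF assms(1)]) auto
  also have "(1 - 1/2) *\<^sub>R t + (1/2) *\<^sub>R (a + b - t) = (a + b) / 2"
    by (simp add: field_simps)
  finally show ?thesis
    using assms(2)[of "a + b - t"] t by auto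
qed

lemma concave_on_continuous_on_Ioo:
  fixes f :: "real \<Rightarrow> real"
  assumes "concave_on {a..b} f"
  shows "continuous_on {a<..<b} f"
proof -
  have "convex_on {a<..<b} (\<lambda>x. - f x)"
    using assms unfolding concave_on_def by (rule convex_on_subset) auto
  then have "continuous_on {a<..<b} (\<lambda>x. - (- f x))"
    by (intro continuous_on_minus convex_on_continuous) auto
  then show ?thesis
    by simp
qed

lemma beta_mean_mem_Ioc:
  fixes a b p q :: real
  assumes "a < b" "p > 0" "q > 0"
  shows "a + (b - a) * (p + 1) / (p + q + 2) \<in> {a<..b}"
proof -
  define \<theta> where "\<theta> = (p + 1) / (p + q + 2)"
  have "0 < \<theta>" "\<theta> \<le> 1"
    using assms by (auto simp: \<theta>_def)
  then have "0 < (b - a) * \<theta>" "(b - a) * \<theta> \<le> b - a"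
    using \<open>a < b\<close> by (auto intro: mult_left_le)
  then show ?thesis
    by (simp add: \<theta>_def)
qed

lemma has_integral_beta_weight_centered:
  fixes a b p q M :: real
  assumes "a < b" "p > 0" "q > 0" and M: "M = a + (b - a) * (p + 1) / (p + q + 2)"
  shows "((\<lambda>t. (t - M) * ((t - a) powr p * (b - t) powr q)) has_integral 0) {a..b}"
proof -
  define F where "F t = (t - a) powr (p + 1) * (b - t) powr (q + 1)" for t
  define F' where "F' t = - (p + q + 2) * ((t - M) * ((t - a) powr p * (b - t) powr q))" for t
  have "continuous_on {a..b} F"
    unfolding F_def using assms by (intro continuous_intros continuous_on_powr') auto
  moreover have "(F has_vector_derivative F' t) (at t)" if t: "t \<in> {a<..<b}" for t
  proof -
    have "(F has_real_derivative
        (p + 1) * (t - a) powr p * (b - t) powr (q + 1) - (q + 1) * (b - t) powr q * (t - a) powr (p + 1)) (at t)"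
      unfolding F_def using t by (auto intro!: derivative_eq_intros)
    moreover have "(p + 1) * (t - a) powr p * (b - t) powr (q + 1) - (q + 1) * (b - t) powr q * (t - a) powr (p + 1)
        = ((p + 1) * (b - t) - (q + 1) * (t - a)) * ((t - a) powr p * (b - t) powr q)"
      using t by (simp add: powr_add algebra_simps)
    moreover have "(p + 1) * (b - t) - (q + 1) * (t - a) = - (p + q + 2) * (t - M)"
      using assms by (simp add: M field_simps)
    ultimately have "(F has_real_derivative F' t) (at t)"
      by (simp add: F'_def mult.assoc)
    then show ?thesis
      by (simp add: has_real_derivative_iff_has_vector_derivative)
  qed
  ultimately have "(F' has_integral (F b - F a)) {a..b}"
    using assms by (intro fundamental_theorem_of_calculus_interior) auto
  moreover have "F b - F a = 0"
    using assms by (simp add: F_def)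
  ultimately have "((\<lambda>t. - 1 / (p + q + 2) * F' t) has_integral 0) {a..b}"
    using has_integral_mult_right[of F' 0 "{a..b}" "- 1 / (p + q + 2)"] by simp
  moreover have "- 1 / (p + q + 2) * F' t = (t - M) * ((t - a) powr p * (b - t) powr q)" for t
    using assms(2,3) by (simp add: F'_def field_simps)
  ultimately show ?thesis
    by simp
qed

lemma weighted_mean_eq_if_centered:
  fixes v :: "real \<Rightarrow> real"
  assumes "v integrable_on S" "(\<lambda>t. t * v t) integrable_on S" "integral S v \<noteq> 0"
    and "((\<lambda>t. (t - M) * v t) has_integral 0) S"
  shows "integral S (\<lambda>t. t * v t) / integral S v = M"
  using integral_mult_diff_left[OF assms(1,2), of M] integral_unique[OF assms(4)] assms(3)
  by (simp add: divide_eq_eq)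

lemma weighted_mean_le_if_centered_bound:
  fixes v w :: "real \<Rightarrow> real"
  assumes "w integrable_on S" "(\<lambda>t. t * w t) integrable_on S" "integral S w > 0"
    and v: "((\<lambda>t. (t - M) * v t) has_integral 0) S"
    and bound: "\<And>t. t \<in> S \<Longrightarrow> (t - M) * w t \<le> K * ((t - M) * v t)"
  shows "integral S (\<lambda>t. t * w t) / integral S w \<le> M"
proof -
  have "integral S (\<lambda>t. t * w t) - M * integral S w = integral S (\<lambda>t. (t - M) * w t)"
    using integral_mult_diff_left[OF assms(1,2)] by simp
  also have "\<dots> \<le> integral S (\<lambda>t. K * ((t - M) * v t))"
  proof (rule integral_le)
    show "(\<lambda>t. (t - M) * w t) integrable_on S"
      using integrable_diff[OF assms(2) integrable_on_cmult_left[OF assms(1), of M]]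
      by (simp add: left_diff_distrib)
    show "(\<lambda>t. K * ((t - M) * v t)) integrable_on S"
      using has_integral_mult_right[OF v] by blast
  qed (rule bound)
  also have "\<dots> = 0"
    using integral_unique[OF has_integral_mult_right[OF v, of K]] by simp
  finally show ?thesis
    using assms(3) by (simp add: pos_divide_le_eq)
qed

lemma concave_weight_centered_bound:
  fixes f u :: "real \<Rightarrow> real"
  assumes "concave_on {a..b} f" and nonneg: "\<And>t. t \<in> {a..b} \<Longrightarrow> f t \<ge> 0"
    and "p > 0" and M: "a < M" "M \<le> b" and t: "t \<in> {a..b}" and "u t \<ge> 0"
  shows "(t - M) * (f t powr p * u t)
    \<le> (f M / (M - a)) powr p * ((t - M) * ((t - a) powr p * u t))"
proof (cases "t = a")
  case True
  then show ?thesis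
    using M nonneg[OF t] \<open>u t \<ge> 0\<close> by (simp add: mult_nonpos_nonneg)
next
  case False
  then have "a < t"
    using t by simp
  define r K where "r = (f t / (t - a)) powr p" and "K = (f M / (M - a)) powr p"
  have "(t - M) * r \<le> (t - M) * K"
  proof (cases "M \<le> t")
    case True
    then have "f t * (M - a) \<le> f M * (t - a)"
      using assms t by (intro concave_on_Icc_ratio_left) auto
    then have "r \<le> K"
      unfolding r_def K_def using \<open>a < t\<close> M nonneg[OF t] \<open>p > 0\<close>
      by (intro powr_mono2) (auto simp: field_simps)
    then show ?thesis
      using True by (intro mult_left_mono) auto
  next
    case False
    then have "f M * (t - a) \<le> f t * (M - a)"
      using assms t \<open>a < t\<close> by (intro concave_on_Icc_ratio_left) auto
    then have "K \<le> r"
      unfolding r_def K_def using \<open>a < t\<close> M nonneg[of M] \<open>p > 0\<close>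
      by (intro powr_mono2) (auto simp: field_simps)
    then show ?thesis
      using False by (intro mult_left_mono_neg) auto
  qed
  then have "(t - M) * r * ((t - a) powr p * u t) \<le> (t - M) * K * ((t - a) powr p * u t)"
    using \<open>u t \<ge> 0\<close> by (intro mult_right_mono) auto
  moreover have "f t powr p = r * (t - a) powr p"
    using \<open>a < t\<close> nonneg[OF t] by (simp add: r_def powr_divide)
  ultimately show ?thesis
    by (simp add: K_def mult_ac)
qed

lemma concave_weighted_mean_le:
  fixes f u :: "real \<Rightarrow> real" and a b p M :: real
  assumes "a < b" "p > 0"
    and conc: "concave_on {a..b} f" and nonneg: "\<And>t. t \<in> {a..b} \<Longrightarrow> f t \<ge> 0"
    and nonzero: "\<exists>t\<in>{a..b}. f t \<noteq> 0"
    and u: "continuous_on {a..b} u" "\<And>t. t \<in> {a..b} \<Longrightarrow> u t \<ge> 0" "\<And>t. t \<in> {a<..<b} \<Longrightarrow> u t > 0"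
    and M: "a < M" "M \<le> b"
    and centered: "((\<lambda>t. (t - M) * ((t - a) powr p * u t)) has_integral 0) {a..b}"
  shows "integral {a..b} (\<lambda>t. t * (f t powr p * u t)) / integral {a..b} (\<lambda>t. f t powr p * u t) \<le> M"
proof (rule weighted_mean_le_if_centered_bound[OF _ _ _ centered])
  define w where "w t = f t powr p * u t" for t
  define m where "m = (a + b) / 2"
  have m: "m \<in> {a<..<b}"
    using \<open>a < b\<close> by (simp add: m_def)
  obtain B where B: "\<And>t. t \<in> {a..b} \<Longrightarrow> \<bar>u t\<bar> \<le> B"
    using continuous_on_compact_bound[OF compact_Icc u(1)] by auto
  have w_bound: "\<bar>w t\<bar> \<le> (2 * f m) powr p * B" if t: "t \<in> {a..b}" for t
  proof -
    have "f t powr p \<le> (2 * f m) powr p"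
      using concave_on_Icc_le_twice_midpoint[OF conc nonneg t] nonneg[OF t] \<open>p > 0\<close>
      by (intro powr_mono2) (auto simp: m_def)
    then show ?thesis
      unfolding w_def abs_mult using t B[OF t] by (intro mult_mono) auto
  qed
  have w_cont: "continuous_on {a<..<b} w"
    unfolding w_def using concave_on_continuous_on_Ioo[OF conc] nonneg \<open>p > 0\<close>
    by (intro continuous_intros continuous_on_powr' continuous_on_subset[OF u(1)]) auto
  show w_int: "w integrable_on {a..b}"
    using w_bound
    by (intro integrable_on_Icc_if_bounded_continuous_on_Ioo[OF w_cont, of "(2 * f m) powr p * B"]) auto
  have "\<bar>t * w t\<bar> \<le> (\<bar>a\<bar> + \<bar>b\<bar>) * ((2 * f m) powr p * B)" if "t \<in> {a<..<b}" for t
    unfolding abs_mult using that w_bound[of t] by (intro mult_mono) auto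
  then show "(\<lambda>t. t * w t) integrable_on {a..b}"
    by (intro integrable_on_Icc_if_bounded_continuous_on_Ioo continuous_intros w_cont)
  have "f m > 0"
    using nonzero nonneg \<open>a < b\<close> m
    by (force intro: concave_on_Icc_pos_interior[OF conc] simp: order.not_eq_order_implies_strict)
  then show "integral {a..b} w > 0"
    using m w_cont w_int u(2,3) nonneg
    by (intro integral_pos_if_continuous_on_Ioo[of a b w m]) (auto simp: w_def)
  show "(t - M) * w t \<le> (f M / (M - a)) powr p * ((t - M) * ((t - a) powr p * u t))" if "t \<in> {a..b}" for t
    unfolding w_def using that u(2) M \<open>p > 0\<close> by (intro concave_weight_centered_bound[OF conc nonneg]) auto
qed

lemma power_weighted_mean_eq:
  fixes u :: "real \<Rightarrow> real" and a b p M :: real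
  assumes "a < b" "p > 0"
    and u: "continuous_on {a..b} u" "\<And>t. t \<in> {a..b} \<Longrightarrow> u t \<ge> 0" "\<And>t. t \<in> {a<..<b} \<Longrightarrow> u t > 0"
    and centered: "((\<lambda>t. (t - M) * ((t - a) powr p * u t)) has_integral 0) {a..b}"
  shows "integral {a..b} (\<lambda>t. t * ((t - a) powr p * u t)) / integral {a..b} (\<lambda>t. (t - a) powr p * u t) = M"
proof (rule weighted_mean_eq_if_centered[OF _ _ _ centered])
  have v_cont: "continuous_on {a..b} (\<lambda>t. (t - a) powr p * u t)"
    using \<open>p > 0\<close> by (intro continuous_intros continuous_on_powr' u(1)) auto
  then show v_int: "(\<lambda>t. (t - a) powr p * u t) integrable_on {a..b}"
    by (rule integrable_continuous_interval)
  show "(\<lambda>t. t * ((t - a) powr p * u t)) integrable_on {a..b}"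
    by (intro integrable_continuous_interval continuous_intros v_cont)
  have "integral {a..b} (\<lambda>t. (t - a) powr p * u t) > 0"
    using \<open>a < b\<close> u(2,3)
    by (intro integral_pos_if_continuous_on_Ioo[OF continuous_on_subset[OF v_cont] _ v_int,
          of "(a + b) / 2"]) auto
  then show "integral {a..b} (\<lambda>t. (t - a) powr p * u t) \<noteq> 0"
    by simp
qed

theorem mainTheorem8:
  fixes \<gamma> \<delta> c \<alpha> \<beta> :: real and g \<phi> :: "real \<Rightarrow> real"
  assumes "\<gamma> < \<delta>" and "c > 0"
    and g_def: "\<And>t. t \<in> {\<gamma>..\<delta>} \<Longrightarrow> g t = c * (\<delta> - t)"
    and "0 < \<beta>" and "\<beta> < \<alpha>"
    and conc: "concave_on {\<gamma>..\<delta>} \<phi>"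
    and nonneg: "\<And>t. t \<in> {\<gamma>..\<delta>} \<Longrightarrow> \<phi> t \<ge> 0"
    and nonzero: "\<exists>t\<in>{\<gamma>..\<delta>}. \<phi> t \<noteq> 0"
  shows "(integral {\<gamma>..\<delta>} (\<lambda>t. t * \<phi> t powr (\<alpha> - \<beta>) * g t powr \<beta>)
           / integral {\<gamma>..\<delta>} (\<lambda>t. \<phi> t powr (\<alpha> - \<beta>) * g t powr \<beta>)
         \<le> integral {\<gamma>..\<delta>} (\<lambda>t. t * (t - \<gamma>) powr (\<alpha> - \<beta>) * g t powr \<beta>)
           / integral {\<gamma>..\<delta>} (\<lambda>t. (t - \<gamma>) powr (\<alpha> - \<beta>) * g t powr \<beta>)) \<and>
         (integral {\<gamma>..\<delta>} (\<lambda>t. t * (t - \<gamma>) powr (\<alpha> - \<beta>) * g t powr \<beta>)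
           / integral {\<gamma>..\<delta>} (\<lambda>t. (t - \<gamma>) powr (\<alpha> - \<beta>) * g t powr \<beta>)
         = \<gamma> + (\<delta> - \<gamma>) * (\<alpha> - \<beta> + 1) / (\<alpha> + 2))"
proof -
  define p M where "p = \<alpha> - \<beta>" and "M = \<gamma> + (\<delta> - \<gamma>) * (\<alpha> - \<beta> + 1) / (\<alpha> + 2)"
  define u where "u t = g t powr \<beta>" for t
  have p: "p > 0" and M_def': "M = \<gamma> + (\<delta> - \<gamma>) * (p + 1) / (p + \<beta> + 2)"
    using \<open>\<beta> < \<alpha>\<close> by (simp_all add: p_def M_def)
  have M: "\<gamma> < M" "M \<le> \<delta>"
    using beta_mean_mem_Ioc[OF \<open>\<gamma> < \<delta>\<close> p \<open>0 < \<beta>\<close>] by (simp_all add: M_def')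
  have u_eq: "u t = c powr \<beta> * (\<delta> - t) powr \<beta>" if "t \<in> {\<gamma>..\<delta>}" for t
    using that \<open>c > 0\<close> by (simp add: u_def g_def powr_mult)
  have "continuous_on {\<gamma>..\<delta>} (\<lambda>t. c powr \<beta> * (\<delta> - t) powr \<beta>)"
    using \<open>0 < \<beta>\<close> by (intro continuous_intros continuous_on_powr') auto
  then have u: "continuous_on {\<gamma>..\<delta>} u" "\<And>t. t \<in> {\<gamma>..\<delta>} \<Longrightarrow> u t \<ge> 0"
    "\<And>t. t \<in> {\<gamma><..<\<delta>} \<Longrightarrow> u t > 0"
    using \<open>c > 0\<close> by (auto simp: u_eq intro: continuous_on_eq)
  have "((\<lambda>t. c powr \<beta> * ((t - M) * ((t - \<gamma>) powr p * (\<delta> - t) powr \<beta>))) has_integral 0) {\<gamma>..\<delta>}"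
    using has_integral_mult_right[OF has_integral_beta_weight_centered[OF \<open>\<gamma> < \<delta>\<close> p \<open>0 < \<beta>\<close> M_def']]
    by simp
  then have centered: "((\<lambda>t. (t - M) * ((t - \<gamma>) powr p * u t)) has_integral 0) {\<gamma>..\<delta>}"
    by (rule has_integral_eq[rotated]) (simp add: u_eq mult_ac)
  note le = concave_weighted_mean_le[OF \<open>\<gamma> < \<delta>\<close> p conc nonneg nonzero u M centered]
  note eq = power_weighted_mean_eq[OF \<open>\<gamma> < \<delta>\<close> p u centered]
  show ?thesis
    using le eq by (simp add: u_def p_def M_def mult.assoc)
qed

end
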